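(* Let $\mathbb G=(\mathbb V,\mathbb E)$ be a connected bipartite locally finite graph, $V$ a parity potential, $r\in\mathbb V$, $\Lambda_n$ the set of vertices at graph distance at most $n$ from $r$, and $\phi$ an admissible height function. Let $m_n=\min_{\partial\Lambda_n}\phi$, define $\psi_n:\mathbb V\to\mathbb Z\cup\{-\infty\}$ by $\psi_n(x)=-\infty$ if $x\notin\Lambda_{n+1}$ and $\psi_n(x)=m_n+d_{\mathbb G}(x,\partial\Lambda_n)$ if $x\in\Lambda_{n+1}$, and let $\phi_n=\phi\vee\psi_n$ (pointwise maximum). Then for every edge $xy\in\mathbb E$, $|\phi(y)-\phi(x)|\ge|\phi_n(y)-\phi_n(x)|\in2\mathbb Z+1$; in particular $\phi_n$ is admissible and $\phi_n\ge\phi$.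
   Context: A parity potential is a symmetric $V:\mathbb Z\to\mathbb R\cup\{\infty\}$ with $V(x)=\infty$ for all even $x$, $V(\pm1)<\infty$, and whose restriction to the odd integers is convex and non-constant. A height function $\phi:\mathbb V\to\mathbb Z$ is admissible if $V(\phi(y)-\phi(x))<\infty$ for every edge $xy$. $\partial\Lambda$ denotes the set of vertices not in $\Lambda$ adjacent to $\Lambda$; $d_{\mathbb G}$ is the graph distance. *)

theory Defs
  imports "HOL-Analysis.Analysis"
begin

definition sym_graph :: "('v \<Rightarrow> 'v \<Rightarrow> bool) \<Rightarrow> bool" where
  "sym_graph E \<longleftrightarrow> (\<forall>x y. E x y \<longrightarrow> E y x)"

definition connected_graph :: "('v \<Rightarrow> 'v \<Rightarrow> bool) \<Rightarrow> bool" where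
  "connected_graph E \<longleftrightarrow> (\<forall>x y. E\<^sup>*\<^sup>* x y)"

definition bipartite_graph :: "('v \<Rightarrow> 'v \<Rightarrow> bool) \<Rightarrow> bool" where
  "bipartite_graph E \<longleftrightarrow> (\<exists>c :: 'v \<Rightarrow> bool. \<forall>x y. E x y \<longrightarrow> c x \<noteq> c y)"

definition locally_finite :: "('v \<Rightarrow> 'v \<Rightarrow> bool) \<Rightarrow> bool" where
  "locally_finite E \<longleftrightarrow> (\<forall>x. finite {y. E x y})"

definition gdist :: "('v \<Rightarrow> 'v \<Rightarrow> bool) \<Rightarrow> 'v \<Rightarrow> 'v \<Rightarrow> nat" where
  "gdist E x y = (LEAST n. (E ^^ n) x y)"

definition gdist_set :: "('v \<Rightarrow> 'v \<Rightarrow> bool) \<Rightarrow> 'v \<Rightarrow> 'v set \<Rightarrow> nat" where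
  "gdist_set E x A = (LEAST n. \<exists>a\<in>A. (E ^^ n) x a)"

definition gball :: "('v \<Rightarrow> 'v \<Rightarrow> bool) \<Rightarrow> 'v \<Rightarrow> nat \<Rightarrow> 'v set" where
  "gball E r n = {x. gdist E r x \<le> n}"

definition vboundary :: "('v \<Rightarrow> 'v \<Rightarrow> bool) \<Rightarrow> 'v set \<Rightarrow> 'v set" where
  "vboundary E L = {x. x \<notin> L \<and> (\<exists>y\<in>L. E x y)}"

text \<open>Potentials V : Z -> R \<union> {\<infinity>}, modelled in ereal with value -\<infinity> excluded.\<close>
definition parity_potential :: "(int \<Rightarrow> ereal) \<Rightarrow> bool" where
  "parity_potential V \<longleftrightarrow>
     (\<forall>x. V x \<noteq> -\<infinity>) \<and>
     (\<forall>x. V (-x) = V x) \<and>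
     (\<forall>x. even x \<longrightarrow> V x = \<infinity>) \<and>
     V 1 < \<infinity> \<and> V (-1) < \<infinity> \<and>
     (\<forall>a b c. odd a \<longrightarrow> odd b \<longrightarrow> odd c \<longrightarrow> a < b \<longrightarrow> b < c \<longrightarrow>
        ereal (of_int (c - a)) * V b \<le> ereal (of_int (c - b)) * V a + ereal (of_int (b - a)) * V c) \<and>
     (\<exists>a b. odd a \<and> odd b \<and> V a \<noteq> V b)"

definition admissible :: "('v \<Rightarrow> 'v \<Rightarrow> bool) \<Rightarrow> (int \<Rightarrow> ereal) \<Rightarrow> ('v \<Rightarrow> int) \<Rightarrow> bool" where
  "admissible E V \<phi> \<longleftrightarrow> (\<forall>x y. E x y \<longrightarrow> V (\<phi> y - \<phi> x) < \<infinity>)"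

definition m_n :: "('v \<Rightarrow> 'v \<Rightarrow> bool) \<Rightarrow> 'v \<Rightarrow> ('v \<Rightarrow> int) \<Rightarrow> nat \<Rightarrow> int" where
  "m_n E r \<phi> n = Min (\<phi> ` vboundary E (gball E r n))"

definition phi_n :: "('v \<Rightarrow> 'v \<Rightarrow> bool) \<Rightarrow> 'v \<Rightarrow> ('v \<Rightarrow> int) \<Rightarrow> nat \<Rightarrow> 'v \<Rightarrow> int" where
  "phi_n E r \<phi> n x =
     (if x \<in> gball E r (n + 1)
      then max (\<phi> x) (m_n E r \<phi> n + int (gdist_set E x (vboundary E (gball E r n))))
      else \<phi> x)"

end

theory Submission
  imports Defs
begin

text \<open>Along every edge an admissible \<phi> changes by an odd amount, so its parity flips at each
  step of a walk. Hence \<phi> has constant parity on the outer boundary \<partial>\<Lambda> of the ball \<Lambda> of radius n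
  (all of whose points lie at distance n + 1 from r), and \<psi> = m + d(\<cdot>, \<partial>\<Lambda>) has the parity of \<phi>
  everywhere. As \<psi> is 1-Lipschitz while \<phi> moves by at least 1 along edges, the maximum of \<phi> and \<psi>
  has increments that are odd and no larger than those of \<phi>; on \<partial>\<Lambda> itself \<psi> = m \<le> \<phi>, so
  cutting \<psi> off outside the ball of radius n + 1 is harmless. Finally, by convexity and symmetry, a
  parity potential finite at an odd d is finite at every odd d' with |d'| \<le> |d|.\<close>

lemma connected_graph_relpowp: "connected_graph E \<Longrightarrow> \<exists>k. (E ^^ k) x y"
  unfolding connected_graph_def by (meson rtranclp_imp_relpowp)

lemma relpowp_gdist: "connected_graph E \<Longrightarrow> (E ^^ gdist E x y) x y"
  unfolding gdist_def using connected_graph_relpowp by (metis LeastI_ex)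

lemma gdist_le: "(E ^^ k) x y \<Longrightarrow> gdist E x y \<le> k"
  unfolding gdist_def by (rule Least_le)

lemma gdist_edge_le: "connected_graph E \<Longrightarrow> E x y \<Longrightarrow> gdist E r y \<le> gdist E r x + 1"
  using gdist_le[OF relpowp_Suc_I[OF relpowp_gdist]] by simp

lemma relpowp_gdist_set:
  assumes "connected_graph E" and "A \<noteq> {}"
  shows "\<exists>a\<in>A. (E ^^ gdist_set E x A) x a"
proof -
  from \<open>A \<noteq> {}\<close> obtain a where "a \<in> A" by blast
  with connected_graph_relpowp[OF assms(1), of x a] have "\<exists>k. \<exists>a\<in>A. (E ^^ k) x a" by blast
  then show ?thesis unfolding gdist_set_def by (rule LeastI_ex)
qed

lemma gdist_set_le: "(E ^^ k) x a \<Longrightarrow> a \<in> A \<Longrightarrow> gdist_set E x A \<le> k"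
  unfolding gdist_set_def by (rule Least_le) blast

lemma gdist_set_eq_0: "x \<in> A \<Longrightarrow> gdist_set E x A = 0"
  using gdist_set_le[of 0 E x x A] by simp

lemma gdist_set_edge_le:
  assumes "connected_graph E" and "A \<noteq> {}" and "E x y"
  shows "gdist_set E x A \<le> gdist_set E y A + 1"
proof -
  obtain a where "a \<in> A" and "(E ^^ gdist_set E y A) y a"
    using relpowp_gdist_set[OF assms(1,2)] by blast
  with gdist_set_le[OF relpowp_Suc_I2[of E x y]] \<open>E x y\<close> show ?thesis by simp
qed

lemma finite_relpowp_image: "locally_finite E \<Longrightarrow> finite {x. (E ^^ k) r x}"
proof (induction k)
  case 0
  then show ?case by (auto elim: relpowp_0_E)
next
  case (Suc k)
  have "{x. (E ^^ Suc k) r x} \<subseteq> (\<Union>y\<in>{x. (E ^^ k) r x}. {z. E y z})"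
    by (auto elim: relpowp_Suc_E)
  moreover have "finite (\<Union>y\<in>{x. (E ^^ k) r x}. {z. E y z})"
    using Suc unfolding locally_finite_def by blast
  ultimately show ?case by (rule finite_subset)
qed

lemma finite_gball:
  assumes "connected_graph E" and "locally_finite E"
  shows "finite (gball E r N)"
proof (rule finite_subset)
  show "gball E r N \<subseteq> (\<Union>k\<in>{..N}. {x. (E ^^ k) r x})"
    unfolding gball_def using relpowp_gdist[OF assms(1)] by auto
  show "finite (\<Union>k\<in>{..N}. {x. (E ^^ k) r x})"
    using finite_relpowp_image[OF assms(2)] by blast
qed

lemma gdist_vboundary_gball:
  assumes "sym_graph E" and "connected_graph E" and "a \<in> vboundary E (gball E r n)"
  shows "gdist E r a = n + 1"
proof -
  from assms(3) obtain z where "gdist E r z \<le> n" "E a z" "gdist E r a > n"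
    unfolding vboundary_def gball_def by auto
  with gdist_edge_le[OF assms(2), of z a r] assms(1) show ?thesis
    unfolding sym_graph_def by fastforce
qed

lemma vboundary_gball_if_edge_leaves:
  assumes "sym_graph E" and "connected_graph E" and "E x y"
    and "x \<in> gball E r (n + 1)" and "y \<notin> gball E r (n + 1)"
  shows "x \<in> vboundary E (gball E r n)"
proof -
  have "gdist E r x = n + 1"
    using gdist_edge_le[OF assms(2,3), of r] assms(4,5) unfolding gball_def by simp
  moreover obtain z where "(E ^^ n) r z" "E z x"
    using relpowp_gdist[OF assms(2), of r x] \<open>gdist E r x = n + 1\<close> by (auto elim: relpowp_Suc_E)
  ultimately show ?thesis
    using gdist_le[where E=E and k=n and x=r and y=z] assms(1) unfolding vboundary_def gball_def sym_graph_def by force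
qed

lemma odd_increment_if_admissible:
  assumes "parity_potential V" and "admissible E V \<phi>" and "E x y"
  shows "odd (\<phi> y - \<phi> x)"
proof
  assume "even (\<phi> y - \<phi> x)"
  with assms(1) have "V (\<phi> y - \<phi> x) = \<infinity>" unfolding parity_potential_def by blast
  with assms(2,3) show False unfolding admissible_def by fastforce
qed

lemma even_increment_minus_walk_length:
  assumes "parity_potential V" and "admissible E V \<phi>" and "(E ^^ k) x y"
  shows "even (\<phi> y - \<phi> x - int k)"
  using assms(3)
proof (induction k arbitrary: y)
  case 0
  then show ?case by (auto elim: relpowp_0_E)
next
  case (Suc k)
  then obtain z where "(E ^^ k) x z" "E z y" by (auto elim: relpowp_Suc_E)
  with Suc.IH odd_increment_if_admissible[OF assms(1,2)] show ?case by fastforce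
qed

lemma parity_potential_finite_if_abs_le:
  assumes P: "parity_potential V" and "V d < \<infinity>" and "odd d'" and "odd d"
    and "\<bar>d'\<bar> \<le> \<bar>d\<bar>"
  shows "V d' < \<infinity>"
proof -
  have sym: "\<And>x. V (- x) = V x" and ninf: "\<And>x. V x \<noteq> -\<infinity>"
    and conv: "\<And>a b c. odd a \<Longrightarrow> odd b \<Longrightarrow> odd c \<Longrightarrow> a < b \<Longrightarrow> b < c \<Longrightarrow>
        ereal (of_int (c - a)) * V b \<le> ereal (of_int (c - b)) * V a + ereal (of_int (b - a)) * V c"
    using P unfolding parity_potential_def by blast+
  let ?c = "\<bar>d\<bar>"
  have Vc: "V ?c < \<infinity>" and Vmc: "V (- ?c) < \<infinity>"
    using \<open>V d < \<infinity>\<close> sym by (cases "d \<ge> 0"; simp)+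
  show ?thesis
  proof (cases "\<bar>d'\<bar> = ?c")
    case True
    then have "d' = ?c \<or> d' = - ?c" by arith
    with Vc Vmc show ?thesis by auto
  next
    case False
    then have lt: "- ?c < d'" "d' < ?c" using \<open>\<bar>d'\<bar> \<le> ?c\<close> by arith+
    have "ereal (of_int (2 * ?c)) * V d'
          \<le> ereal (of_int (?c - d')) * V (- ?c) + ereal (of_int (d' + ?c)) * V ?c"
      using conv[of "- ?c" d' ?c] \<open>odd d\<close> \<open>odd d'\<close> lt by (simp add: algebra_simps)
    moreover have "ereal (of_int (?c - d')) * V (- ?c) + ereal (of_int (d' + ?c)) * V ?c < \<infinity>"
      using Vc Vmc ninf[of ?c] ninf[of "- ?c"] by (cases "V ?c"; cases "V (- ?c)") auto
    moreover have "(0::real) < of_int (2 * ?c)" using lt by simp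
    ultimately show ?thesis by (cases "V d'") (auto simp del: of_int_mult)
  qed
qed

lemma abs_max_diff_le:
  fixes a b c d :: int
  assumes "\<bar>b - d\<bar> \<le> 1" and "1 \<le> \<bar>a - c\<bar>"
  shows "\<bar>max a b - max c d\<bar> \<le> \<bar>a - c\<bar>"
  using assms by (simp add: max_def abs_if split: if_splits)

locale ball_truncation =
  fixes E :: "'v \<Rightarrow> 'v \<Rightarrow> bool" and V :: "int \<Rightarrow> ereal"
    and r :: 'v and \<phi> :: "'v \<Rightarrow> int" and n :: nat
  assumes sym: "sym_graph E" and connected: "connected_graph E"
    and locally_finite: "locally_finite E"
    and potential: "parity_potential V" and admissible: "admissible E V \<phi>"
    and boundary_nonempty: "vboundary E (gball E r n) \<noteq> {}"
begin

abbreviation bd :: "'v set" where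
  "bd \<equiv> vboundary E (gball E r n)"

abbreviation \<psi> :: "'v \<Rightarrow> int" where
  "\<psi> x \<equiv> m_n E r \<phi> n + int (gdist_set E x bd)"

lemma edge_sym: "E x y \<Longrightarrow> E y x"
  using sym unfolding sym_graph_def by blast

lemma phi_n_eq: "phi_n E r \<phi> n x = (if x \<in> gball E r (n + 1) then max (\<phi> x) (\<psi> x) else \<phi> x)"
  unfolding phi_n_def by simp

lemma finite_bd: "finite bd"
proof (rule finite_subset)
  show "bd \<subseteq> gball E r (n + 1)"
    using gdist_vboundary_gball[OF sym connected] by (auto simp: gball_def)
  show "finite (gball E r (n + 1))" by (rule finite_gball[OF connected locally_finite])
qed

lemma m_n_le: "a \<in> bd \<Longrightarrow> m_n E r \<phi> n \<le> \<phi> a"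
  unfolding m_n_def using finite_bd by simp

lemma m_n_mem: "m_n E r \<phi> n \<in> \<phi> ` bd"
  unfolding m_n_def using finite_bd boundary_nonempty by simp

lemma even_boundary_diff:
  assumes "a \<in> bd" and "b \<in> bd"
  shows "even (\<phi> a - \<phi> b)"
proof -
  have "even (\<phi> c - \<phi> r - int (n + 1))" if "c \<in> bd" for c
    using even_increment_minus_walk_length[OF potential admissible relpowp_gdist[OF connected]]
      gdist_vboundary_gball[OF sym connected that] by metis
  from this[OF assms(1)] this[OF assms(2)] show ?thesis by presburger
qed

lemma even_psi_diff: "even (\<psi> x - \<phi> x)"
proof -
  obtain a0 where "a0 \<in> bd" and m: "m_n E r \<phi> n = \<phi> a0" using m_n_mem by blast
  obtain a where "a \<in> bd" and walk: "(E ^^ gdist_set E x bd) x a"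
    using relpowp_gdist_set[OF connected boundary_nonempty] by blast
  have "even (\<phi> a - \<phi> x - int (gdist_set E x bd))"
    using even_increment_minus_walk_length[OF potential admissible walk] .
  moreover have "even (\<phi> a0 - \<phi> a)" using even_boundary_diff \<open>a0 \<in> bd\<close> \<open>a \<in> bd\<close> .
  ultimately show ?thesis unfolding m by presburger
qed

lemma even_phi_n_diff: "even (phi_n E r \<phi> n x - \<phi> x)"
  using even_psi_diff[of x] by (simp add: phi_n_eq max_def)

lemma phi_n_ge: "\<phi> x \<le> phi_n E r \<phi> n x"
  by (simp add: phi_n_eq)

lemma phi_n_boundary: "x \<in> bd \<Longrightarrow> phi_n E r \<phi> n x = \<phi> x"
  using m_n_le[of x] gdist_vboundary_gball[OF sym connected, of x]
  by (simp add: phi_n_eq gdist_set_eq_0 gball_def)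

lemma phi_n_edge_le:
  assumes "E x y"
  shows "\<bar>phi_n E r \<phi> n y - phi_n E r \<phi> n x\<bar> \<le> \<bar>\<phi> y - \<phi> x\<bar>"
proof -
  have "odd (\<phi> y - \<phi> x)" using odd_increment_if_admissible[OF potential admissible assms] .
  then have one: "1 \<le> \<bar>\<phi> y - \<phi> x\<bar>" by presburger
  have lip: "\<bar>\<psi> y - \<psi> x\<bar> \<le> 1"
    using gdist_set_edge_le[OF connected boundary_nonempty assms]
      gdist_set_edge_le[OF connected boundary_nonempty edge_sym[OF assms]] by simp
  have leave: "phi_n E r \<phi> n u = \<phi> u"
    if "E u w" "u \<in> gball E r (n + 1)" "w \<notin> gball E r (n + 1)" for u w
    using phi_n_boundary vboundary_gball_if_edge_leaves[OF sym connected that] .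
  show ?thesis
    using abs_max_diff_le[OF lip one] leave[OF assms] leave[OF edge_sym[OF assms]]
    by (cases "x \<in> gball E r (n + 1)"; cases "y \<in> gball E r (n + 1)") (simp_all add: phi_n_eq)
qed

lemma odd_phi_n_edge:
  assumes "E x y"
  shows "odd (phi_n E r \<phi> n y - phi_n E r \<phi> n x)"
  using odd_increment_if_admissible[OF potential admissible assms]
    even_phi_n_diff[of x] even_phi_n_diff[of y] by presburger

lemma admissible_phi_n: "admissible E V (phi_n E r \<phi> n)"
  unfolding admissible_def
proof (intro allI impI)
  fix x y assume "E x y"
  with admissible show "V (phi_n E r \<phi> n y - phi_n E r \<phi> n x) < \<infinity>"
    using parity_potential_finite_if_abs_le[OF potential _ odd_phi_n_edge
        odd_increment_if_admissible[OF potential admissible] phi_n_edge_le]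
    unfolding admissible_def by blast
qed

end

theorem mainTheorem6:
  fixes E :: "'v \<Rightarrow> 'v \<Rightarrow> bool" and V :: "int \<Rightarrow> ereal"
    and r :: 'v and \<phi> :: "'v \<Rightarrow> int" and n :: nat
  assumes "sym_graph E" and "connected_graph E" and "bipartite_graph E"
    and "locally_finite E"
    and "parity_potential V"
    and "admissible E V \<phi>"
    and "vboundary E (gball E r n) \<noteq> {}"
  shows "(\<forall>x y. E x y \<longrightarrow>
            \<bar>phi_n E r \<phi> n y - phi_n E r \<phi> n x\<bar> \<le> \<bar>\<phi> y - \<phi> x\<bar> \<and>
            odd (phi_n E r \<phi> n y - phi_n E r \<phi> n x))
         \<and> admissible E V (phi_n E r \<phi> n)
         \<and> (\<forall>x. \<phi> x \<le> phi_n E r \<phi> n x)"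
proof -
  interpret ball_truncation E V r \<phi> n
    using assms(1,2,4-7) by unfold_locales
  show ?thesis using phi_n_edge_le odd_phi_n_edge admissible_phi_n phi_n_ge by blast
qed

end
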